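(* Let $\mathcal{T}$ be a teacher class over $\mathcal{X},\mathcal{Y},\Phi$ and let $H\subseteq\mathcal{X}\times\mathcal{Y}$ be a non-empty history that is consistent with $\mathcal{T}$. Then \[\min_{\mathcal{A}} M(\mathcal{A},\mathcal{T},H)=\mathrm{DFFdim}(\mathcal{T},H),\] where the minimum is over all deterministic DFF algorithms $\mathcal{A}$.
   Context: Setting. $\mathcal{X}$ is a set of examples, $\mathcal{Y}$ a finite set of labels, and $\Phi$ a set of Boolean features $\phi:\mathcal{X}\to\{0,1\}$; $\bot$ denotes a null symbol not in $\mathcal{X}\cup\mathcal{Y}\cup\Phi$. A teacher over $\mathcal{X},\mathcal{Y},\Phi$ is a pair $T=(\ell,\psi)$ with $\ell:\mathcal{X}\to\mathcal{Y}$ and $\psi:\mathcal{X}\times\mathcal{X}\to\Phi\cup\{\bot\}$ such that whenever $\ell(x)\neq\ell(\hat x)$, $\phi:=\psi(x,\hat x)\in\Phi$, $\phi(x)=1$ and $\phi(\hat x)=0$. A teacher class is a set of teachers. A history is a non-empty set $H\subseteq\mathcal{X}\times\mathcal{Y}$; a teacher $(\ell,\psi)$ is consistent with $H$ if $\ell(x)=y$ for all $(x,y)\in H$; $\mathcal{T}_H$ is the set of teachers in $\mathcal{T}$ consistent with $H$, and $\mathcal{T}$ is consistent with $H$ if $\mathcal{T}_H\neq\emptyset$. DFF protocol. A DFF algorithm is given $H$ in advance. In each round $t=1,2,\dots$: an example $x_t\in\mathcal{X}$ arrives; the algorithm outputs a predicted label $\hat y_t$ and an explanation $\hat x_t$,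 where $(\hat x_t,\hat y_t)$ must belong to $H\cup\{(x_s,y_s):s<t\}$; if $\hat y_t=y_t$ (the true label of $x_t$) the algorithm learns only that it was correct; otherwise (a mistake) it receives $y_t$ and a feature $\phi_t\in\Phi$. The feedback of round $t$ is consistent with a teacher $(\ell,\psi)$ if $y_t=\ell(x_t)$ and, when $\hat y_t\neq y_t$, $\phi_t=\psi(x_t,\hat x_t)$. $M(\mathcal{A},\mathcal{T},H)$ denotes the supremum, over all finite example sequences and all teachers $T\in\mathcal{T}_H$, of the number of mistakes of $\mathcal{A}$ when all feedback is consistent with $T$. DFF dimension. A DFF tree is a rooted tree whose nodes are triples $\langle y,\phi,x\rangle$ with $y\in\mathcal{Y}\cup\{\bot\}$, $\phi\in\Phi\cup\{\bot\}$, $x\in\mathcal{X}\cup\{\bot\}$, such that the root has $y=\phi=\bot$, a node has $x=\bot$ iff it is a leaf, every edge is labeled by a pair $(\hat x,\hat y)\in\mathcal{X}\times\mathcal{Y}$, and every non-root node $\langle y,\phi,x\rangle$ with incoming edge $(\hat x,\hat y)$ has $\phi\neq\bot$ whenever $y\neq\hat y$. For a parent–child pair $\langle\cdot,\cdot,x\rangle\xrightarrow{(\hat x,\hat y)}\langle y,\phi,\cdot\rangle$ on a path, $(x,y)$ is called a labeled example in that path. A path from the root is consistent with a teacher $(\ell,\psi)$ if for every such parent–child pair on it, $\ell(x)=y$ and, if $y\neq\hat y$, $\psi(x,\hat x)=\phi$. Given $\mathcal{T}$ consistent with $H$, a DFF tree is shattered by $\mathcal{T}$ and $H$ if: (1)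 every non-root node $\langle y,\phi,x\rangle$ with incoming edge $(\hat x,\hat y)$ has $y\neq\hat y$; (2) the labels of the outgoing edges of each non-leaf node $v$ are exactly the pairs that belong to $H$ or are labeled examples in the path from the root to $v$; (3) every root-to-leaf path is consistent with some teacher in $\mathcal{T}_H$; (4) all root-to-leaf paths have the same number of edges, called the height. $\mathrm{DFFdim}(\mathcal{T},H)$ is the maximal height of a DFF tree shattered by $\mathcal{T}$ and $H$. *)

theory Defs
  imports Main "HOL-Library.Extended_Nat"
begin

text \<open>Examples are elements of type 'x, labels elements of the finite type 'y,
  features are Boolean functions on examples ('x => bool), the feature set is Phi.
  The null symbol is modelled by None.\<close>

type_synonym ('x, 'y) teacher = "('x \<Rightarrow> 'y) \<times> ('x \<Rightarrow> 'x \<Rightarrow> ('x \<Rightarrow> bool) option)"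

definition is_teacher :: "('x \<Rightarrow> bool) set \<Rightarrow> ('x, 'y) teacher \<Rightarrow> bool" where
  "is_teacher Phi T \<longleftrightarrow>
     (\<forall>x xh. set_option (snd T x xh) \<subseteq> Phi) \<and>
     (\<forall>x xh. fst T x \<noteq> fst T xh \<longrightarrow>
        (\<exists>\<phi>\<in>Phi. snd T x xh = Some \<phi> \<and> \<phi> x \<and> \<not> \<phi> xh))"

definition teacher_class :: "('x \<Rightarrow> bool) set \<Rightarrow> ('x, 'y) teacher set \<Rightarrow> bool" where
  "teacher_class Phi TT \<longleftrightarrow> (\<forall>T\<in>TT. is_teacher Phi T)"

definition consistent_hist :: "('x \<times> 'y) set \<Rightarrow> ('x, 'y) teacher \<Rightarrow> bool" where
  "consistent_hist H T \<longleftrightarrow> (\<forall>(x, y)\<in>H. fst T x = y)"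

definition teachers_H :: "('x, 'y) teacher set \<Rightarrow> ('x \<times> 'y) set \<Rightarrow> ('x, 'y) teacher set" where
  "teachers_H TT H = {T \<in> TT. consistent_hist H T}"

text \<open>One round of an interaction: the example x_t, the explanation, the predicted label,
  and the feedback: None = "correct", Some (y, phi) = mistake with true label y and feature phi.\<close>

datatype ('x, 'y) round =
  Round (r_ex: 'x) (r_expl: 'x) (r_pred: 'y) (r_fb: "('y \<times> ('x \<Rightarrow> bool)) option")

definition r_label :: "('x, 'y) round \<Rightarrow> 'y" where
  "r_label r = (case r_fb r of None \<Rightarrow> r_pred r | Some (y, _) \<Rightarrow> y)"

text \<open>A deterministic DFF algorithm (for the history H given in advance) maps the transcript
  of the previous rounds and the current example to an (explanation, predicted label) pair.\<close>
type_synonym ('x, 'y) dff_algorithm = "('x, 'y) round list \<Rightarrow> 'x \<Rightarrow> 'x \<times> 'y"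

definition is_run :: "('x, 'y) dff_algorithm \<Rightarrow> ('x, 'y) round list \<Rightarrow> bool" where
  "is_run A rs \<longleftrightarrow>
     (\<forall>i < length rs. A (take i rs) (r_ex (rs ! i)) = (r_expl (rs ! i), r_pred (rs ! i)))"

definition allowed_pairs :: "('x \<times> 'y) set \<Rightarrow> ('x, 'y) round list \<Rightarrow> ('x \<times> 'y) set" where
  "allowed_pairs H rs = H \<union> {(r_ex r, r_label r) | r. r \<in> set rs}"

definition dff_alg :: "('x \<times> 'y) set \<Rightarrow> ('x, 'y) dff_algorithm \<Rightarrow> bool" where
  "dff_alg H A \<longleftrightarrow> (\<forall>rs x. is_run A rs \<longrightarrow> A rs x \<in> allowed_pairs H rs)"

definition round_consistent :: "('x, 'y) teacher \<Rightarrow> ('x, 'y) round \<Rightarrow> bool" where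
  "round_consistent T r \<longleftrightarrow>
     (case r_fb r of
        None \<Rightarrow> fst T (r_ex r) = r_pred r
      | Some (y, \<phi>) \<Rightarrow> y = fst T (r_ex r) \<and> r_pred r \<noteq> y \<and> snd T (r_ex r) (r_expl r) = Some \<phi>)"

definition num_mistakes :: "('x, 'y) round list \<Rightarrow> nat" where
  "num_mistakes rs = length (filter (\<lambda>r. r_fb r \<noteq> None) rs)"

definition mistake_bound ::
  "('x, 'y) dff_algorithm \<Rightarrow> ('x, 'y) teacher set \<Rightarrow> ('x \<times> 'y) set \<Rightarrow> enat" where
  "mistake_bound A TT H =
     (SUP rs \<in> {rs. is_run A rs \<and> (\<exists>T\<in>teachers_H TT H. \<forall>r\<in>set rs. round_consistent T r)}.
        enat (num_mistakes rs))"

text \<open>A tree is represented by its set of root-to-node paths (lists of edge labels,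
  prefix closed, containing the root []) together with the node labelling.\<close>

type_synonym ('x, 'y) node = "'y option \<times> ('x \<Rightarrow> bool) option \<times> 'x option"

definition n_y :: "('x, 'y) node \<Rightarrow> 'y option" where "n_y v = fst v"
definition n_phi :: "('x, 'y) node \<Rightarrow> ('x \<Rightarrow> bool) option" where "n_phi v = fst (snd v)"
definition n_x :: "('x, 'y) node \<Rightarrow> 'x option" where "n_x v = snd (snd v)"

definition is_leaf :: "('x \<times> 'y) list set \<Rightarrow> ('x \<times> 'y) list \<Rightarrow> bool" where
  "is_leaf P p \<longleftrightarrow> p \<in> P \<and> (\<forall>e. p @ [e] \<notin> P)"

definition dff_tree ::
  "('x \<Rightarrow> bool) set \<Rightarrow> ('x \<times> 'y) list set \<Rightarrow> (('x \<times> 'y) list \<Rightarrow> ('x, 'y) node) \<Rightarrow> bool" where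
  "dff_tree Phi P N \<longleftrightarrow>
     [] \<in> P \<and>
     (\<forall>p e. p @ [e] \<in> P \<longrightarrow> p \<in> P) \<and>
     n_y (N []) = None \<and> n_phi (N []) = None \<and>
     (\<forall>p\<in>P. set_option (n_phi (N p)) \<subseteq> Phi) \<and>
     (\<forall>p\<in>P. n_x (N p) = None \<longleftrightarrow> is_leaf P p) \<and>
     (\<forall>p xh yh. p @ [(xh, yh)] \<in> P \<longrightarrow>
        n_y (N (p @ [(xh, yh)])) \<noteq> Some yh \<longrightarrow> n_phi (N (p @ [(xh, yh)])) \<noteq> None)"

definition path_examples ::
  "(('x \<times> 'y) list \<Rightarrow> ('x, 'y) node) \<Rightarrow> ('x \<times> 'y) list \<Rightarrow> ('x \<times> 'y) set" where
  "path_examples N p = {(x, y) | x y i. i < length p \<and>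
      n_x (N (take i p)) = Some x \<and> n_y (N (take (Suc i) p)) = Some y}"

definition path_consistent ::
  "(('x \<times> 'y) list \<Rightarrow> ('x, 'y) node) \<Rightarrow> ('x \<times> 'y) list \<Rightarrow> ('x, 'y) teacher \<Rightarrow> bool" where
  "path_consistent N p T \<longleftrightarrow>
     (\<forall>i < length p. \<forall>x. n_x (N (take i p)) = Some x \<longrightarrow>
        n_y (N (take (Suc i) p)) = Some (fst T x) \<and>
        (fst T x \<noteq> snd (p ! i) \<longrightarrow> snd T x (fst (p ! i)) = n_phi (N (take (Suc i) p))))"

definition shattered ::
  "('x \<Rightarrow> bool) set \<Rightarrow> ('x, 'y) teacher set \<Rightarrow> ('x \<times> 'y) set \<Rightarrow>
   ('x \<times> 'y) list set \<Rightarrow> (('x \<times> 'y) list \<Rightarrow> ('x, 'y) node) \<Rightarrow> nat \<Rightarrow> bool" where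
  "shattered Phi TT H P N d \<longleftrightarrow>
     dff_tree Phi P N \<and>
     \<comment> \<open>(1)\<close>
     (\<forall>p xh yh. p @ [(xh, yh)] \<in> P \<longrightarrow> n_y (N (p @ [(xh, yh)])) \<noteq> Some yh) \<and>
     \<comment> \<open>(2)\<close>
     (\<forall>p\<in>P. \<not> is_leaf P p \<longrightarrow> {e. p @ [e] \<in> P} = H \<union> path_examples N p) \<and>
     \<comment> \<open>(3)\<close>
     (\<forall>p. is_leaf P p \<longrightarrow> (\<exists>T\<in>teachers_H TT H. path_consistent N p T)) \<and>
     \<comment> \<open>(4): every root-to-leaf path has exactly d edges (and the tree has depth d)\<close>
     (\<forall>p\<in>P. length p \<le> d \<and> (is_leaf P p \<longleftrightarrow> length p = d))"

definition DFFdim :: "('x \<Rightarrow> bool) set \<Rightarrow> ('x, 'y) teacher set \<Rightarrow> ('x \<times> 'y) set \<Rightarrow> enat" where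
  "DFFdim Phi TT H = (SUP d \<in> {d. \<exists>P N. shattered Phi TT H P N d}. enat d)"

end

theory Submission
  imports Defs
begin

text \<open>
  Lower bound: given a shattered tree of height \<open>d\<close>, an adversary shows the algorithm the
  example of the current node. By condition (2) the algorithm's answer is one of the outgoing
  edges; the adversary follows it and reports the label and feature of the child, which is a
  mistake by condition (1). After \<open>d\<close> rounds a leaf is reached, and condition (3) provides a
  teacher consistent with all the feedback.

  Upper bound: the algorithm keeps the version space of teachers consistent with its mistakes and
  answers with an explanation after which every possible mistake strictly lowers the DFF dimension
  of the version space. Such an explanation exists: otherwise, for every allowed answer some
  mistake leaves the dimension unchanged, and the trees witnessing this can be grafted below a
  root labelled with the current example, giving a shattered tree one level higher than the
  dimension.
\<close>

lemma node_sel [simp]: "n_y (a, b, c) = a" "n_phi (a, b, c) = b" "n_x (a, b, c) = c"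
  by (simp_all add: n_y_def n_phi_def n_x_def)

lemma dff_tree_prefix_closed:
  assumes "dff_tree Phi P N" and "q @ r \<in> P"
  shows "q \<in> P"
  using assms(2)
proof (induction r rule: rev_induct)
  case (snoc e r)
  then show ?case using assms(1) unfolding dff_tree_def by (metis append_assoc)
qed simp

lemma dff_tree_take: "dff_tree Phi P N \<Longrightarrow> p \<in> P \<Longrightarrow> take i p \<in> P"
  by (metis append_take_drop_id dff_tree_prefix_closed)

lemma dff_tree_inner_example:
  "dff_tree Phi P N \<Longrightarrow> p \<in> P \<Longrightarrow> \<not> is_leaf P p \<Longrightarrow> \<exists>x. n_x (N p) = Some x"
  unfolding dff_tree_def by blast

lemma dff_tree_mistake_feature:
  "dff_tree Phi P N \<Longrightarrow> p @ [(xh, yh)] \<in> P \<Longrightarrow> n_y (N (p @ [(xh, yh)])) \<noteq> Some yh \<Longrightarrow>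
     \<exists>\<phi>. n_phi (N (p @ [(xh, yh)])) = Some \<phi>"
  unfolding dff_tree_def by blast

lemma shattered_dff_tree: "shattered Phi V H P N d \<Longrightarrow> dff_tree Phi P N"
  unfolding shattered_def by blast

lemma shattered_mistake:
  "shattered Phi V H P N d \<Longrightarrow> p @ [(xh, yh)] \<in> P \<Longrightarrow> n_y (N (p @ [(xh, yh)])) \<noteq> Some yh"
  unfolding shattered_def by blast

lemma shattered_children:
  "shattered Phi V H P N d \<Longrightarrow> p \<in> P \<Longrightarrow> \<not> is_leaf P p \<Longrightarrow>
     {e. p @ [e] \<in> P} = H \<union> path_examples N p"
  unfolding shattered_def by blast

lemma shattered_leaf_teacher:
  "shattered Phi V H P N d \<Longrightarrow> is_leaf P p \<Longrightarrow> \<exists>T\<in>teachers_H V H. path_consistent N p T"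
  unfolding shattered_def by blast

lemma shattered_length:
  "shattered Phi V H P N d \<Longrightarrow> p \<in> P \<Longrightarrow> length p \<le> d \<and> (is_leaf P p \<longleftrightarrow> length p = d)"
  unfolding shattered_def by blast

lemma shattered_extends_to_leaf:
  assumes sh: "shattered Phi V H P N d" and "p \<in> P"
  shows "\<exists>r. is_leaf P (p @ r)"
  using \<open>p \<in> P\<close>
proof (induction "d - length p" arbitrary: p)
  case 0
  then show ?case using shattered_length[OF sh] by (metis append_Nil2 diff_is_0_eq le_antisym)
next
  case (Suc n)
  show ?case
  proof (cases "is_leaf P p")
    case True
    then show ?thesis by (metis append_Nil2)
  next
    case False
    then obtain e where "p @ [e] \<in> P" using Suc.prems by (auto simp: is_leaf_def)
    moreover have "n = d - length (p @ [e])" using Suc.hyps(2) by simp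
    ultimately obtain r where "is_leaf P ((p @ [e]) @ r)" using Suc.hyps(1) by blast
    then show ?thesis by auto
  qed
qed

lemma path_consistent_prefix:
  assumes "path_consistent N (p @ r) T"
  shows "path_consistent N p T"
  unfolding path_consistent_def
proof (intro allI impI)
  fix i x
  assume "i < length p"
  then have "take i (p @ r) = take i p" "take (Suc i) (p @ r) = take (Suc i) p" "(p @ r) ! i = p ! i"
    "i < length (p @ r)"
    by (simp_all add: nth_append)
  then show "n_x (N (take i p)) = Some x \<Longrightarrow> n_y (N (take (Suc i) p)) = Some (fst T x) \<and>
      (fst T x \<noteq> snd (p ! i) \<longrightarrow> snd T x (fst (p ! i)) = n_phi (N (take (Suc i) p)))"
    using assms unfolding path_consistent_def by metis
qed

lemma shattered_path_labelled:
  assumes sh: "shattered Phi V H P N d" and "p \<in> P" and "i < length p"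
  shows "\<exists>x y. n_x (N (take i p)) = Some x \<and> n_y (N (take (Suc i) p)) = Some y"
proof -
  have dt: "dff_tree Phi P N" using sh by (rule shattered_dff_tree)
  have "take i p @ [p ! i] \<in> P"
    using dff_tree_take[OF dt \<open>p \<in> P\<close>, of "Suc i"] \<open>i < length p\<close> by (simp add: take_Suc_conv_app_nth)
  then have "\<not> is_leaf P (take i p)" unfolding is_leaf_def by blast
  then obtain x where x: "n_x (N (take i p)) = Some x"
    using dff_tree_inner_example[OF dt dff_tree_take[OF dt \<open>p \<in> P\<close>]] by blast
  obtain r T where "path_consistent N (p @ r) T"
    using shattered_extends_to_leaf[OF sh \<open>p \<in> P\<close>] shattered_leaf_teacher[OF sh] by blast
  then have "n_y (N (take (Suc i) p)) = Some (fst T x)"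
    using path_consistent_prefix x \<open>i < length p\<close> unfolding path_consistent_def by blast
  then show ?thesis using x by blast
qed

lemma path_examples_cong:
  assumes "\<And>i. i < length p \<Longrightarrow> n_x (N' (take i p)) = n_x (N (take i p))"
    and "\<And>i. i < length p \<Longrightarrow> n_y (N' (take (Suc i) p)) = n_y (N (take (Suc i) p))"
  shows "path_examples N' p = path_examples N p"
  unfolding path_examples_def by (auto simp: assms)

lemma path_consistent_cong:
  assumes "\<And>i. i < length p \<Longrightarrow> n_x (N' (take i p)) = n_x (N (take i p))"
    and "\<And>i. i < length p \<Longrightarrow> n_y (N' (take (Suc i) p)) = n_y (N (take (Suc i) p))"
    and "\<And>i. i < length p \<Longrightarrow> n_phi (N' (take (Suc i) p)) = n_phi (N (take (Suc i) p))"
  shows "path_consistent N' p T \<longleftrightarrow> path_consistent N p T"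
  unfolding path_consistent_def by (auto simp: assms)

lemma path_examples_Cons:
  "path_examples N (e # q) =
     {(x, y) | x y. n_x (N []) = Some x \<and> n_y (N [e]) = Some y} \<union> path_examples (\<lambda>q. N (e # q)) q"
  unfolding path_examples_def by (auto simp: less_Suc_eq_0_disj)

lemma path_consistent_Cons:
  "path_consistent N (e # q) T \<longleftrightarrow>
     (\<forall>x. n_x (N []) = Some x \<longrightarrow> n_y (N [e]) = Some (fst T x) \<and>
        (fst T x \<noteq> snd e \<longrightarrow> snd T x (fst e) = n_phi (N [e]))) \<and>
     path_consistent (\<lambda>q. N (e # q)) q T"
  unfolding path_consistent_def by (simp add: All_less_Suc2)

lemma shattered_height_0:
  assumes "teachers_H V H \<noteq> {}"
  shows "shattered Phi V H {[]} (\<lambda>_. (None, None, None)) 0"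
proof -
  have "is_leaf {[]} p \<longleftrightarrow> p = []" for p :: "('x \<times> 'y) list"
    by (auto simp: is_leaf_def)
  then show ?thesis
    using assms unfolding shattered_def dff_tree_def path_consistent_def by auto
qed

lemma shattered_truncate:
  assumes sh: "shattered Phi V H P N d" and "k \<le> d"
  shows "shattered Phi V H {p \<in> P. length p \<le> k}
           (\<lambda>p. if length p = k then (n_y (N p), n_phi (N p), None) else N p) k"
    (is "shattered _ _ _ ?P ?N _")
proof -
  have dt: "dff_tree Phi P N" using sh by (rule shattered_dff_tree)
  have inner: "\<not> is_leaf P p" if "p \<in> P" "length p < k" for p
    using shattered_length[OF sh that(1)] that(2) \<open>k \<le> d\<close> by simp
  have leaf: "is_leaf ?P p \<longleftrightarrow> p \<in> P \<and> length p = k" for p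
  proof
    assume p: "is_leaf ?P p"
    show "p \<in> P \<and> length p = k"
    proof (rule ccontr)
      assume "\<not> ?thesis"
      with p have "p \<in> P" "length p < k" by (auto simp: is_leaf_def)
      then obtain e where "p @ [e] \<in> P" using inner unfolding is_leaf_def by blast
      with p \<open>length p < k\<close> show False unfolding is_leaf_def by (cases e) auto
    qed
  qed (auto simp: is_leaf_def)
  have same_path: "path_examples ?N p = path_examples N p"
    "path_consistent ?N p T \<longleftrightarrow> path_consistent N p T" if "length p \<le> k" for p T
    using that by (intro path_examples_cong path_consistent_cong; simp)+
  have "dff_tree Phi ?P ?N"
    using dt leaf inner unfolding dff_tree_def by (auto 0 3)
  moreover have "\<exists>T\<in>teachers_H V H. path_consistent ?N p T" if "is_leaf ?P p" for p
  proof -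
    have "p \<in> P" "length p = k" using that leaf by auto
    then obtain r T where "T \<in> teachers_H V H" "path_consistent N (p @ r) T"
      using shattered_extends_to_leaf[OF sh] shattered_leaf_teacher[OF sh] by blast
    with \<open>length p = k\<close> show ?thesis using path_consistent_prefix same_path by blast
  qed
  ultimately show ?thesis
    using sh leaf same_path inner unfolding shattered_def by auto
qed

lemma shattered_le_DFFdim: "shattered Phi V H P N d \<Longrightarrow> enat d \<le> DFFdim Phi V H"
  unfolding DFFdim_def by (auto intro: SUP_upper)

lemma DFFdim_teachers_H: "DFFdim Phi (teachers_H V H) H = DFFdim Phi V H"
proof -
  have "teachers_H (teachers_H V H) H = teachers_H V H" by (auto simp: teachers_H_def)
  then show ?thesis unfolding DFFdim_def shattered_def by simp
qed

lemma shattered_iff_le_DFFdim: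
  assumes "teachers_H V H \<noteq> {}"
  shows "(\<exists>P N. shattered Phi V H P N k) \<longleftrightarrow> enat k \<le> DFFdim Phi V H"
proof
  assume "\<exists>P N. shattered Phi V H P N k"
  then show "enat k \<le> DFFdim Phi V H" using shattered_le_DFFdim by blast
next
  assume k: "enat k \<le> DFFdim Phi V H"
  show "\<exists>P N. shattered Phi V H P N k"
  proof (cases k)
    case 0
    then show ?thesis using shattered_height_0[OF assms] by blast
  next
    case (Suc j)
    then have "enat j < DFFdim Phi V H" using k by (simp add: Suc_ile_eq)
    then obtain d P N where "shattered Phi V H P N d" "j < d"
      unfolding DFFdim_def less_SUP_iff by auto
    then show ?thesis using shattered_truncate[of Phi V H P N d k] \<open>k = Suc j\<close> by auto
  qed
qed

section \<open>The lower bound\<close>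

text \<open>Round \<open>i\<close> of the adversary's walk down \<open>p\<close>: the example of the \<open>i\<close>-th node, the
  \<open>i\<close>-th edge as the answer, and the label and feature of the next node as a mistake.\<close>
definition path_round ::
  "(('x \<times> 'y) list \<Rightarrow> ('x, 'y) node) \<Rightarrow> ('x \<times> 'y) list \<Rightarrow> nat \<Rightarrow> ('x, 'y) round" where
  "path_round N p i =
     Round (the (n_x (N (take i p)))) (fst (p ! i)) (snd (p ! i))
       (Some (the (n_y (N (take (Suc i) p))), the (n_phi (N (take (Suc i) p)))))"

definition path_rounds ::
  "(('x \<times> 'y) list \<Rightarrow> ('x, 'y) node) \<Rightarrow> ('x \<times> 'y) list \<Rightarrow> ('x, 'y) round list" where
  "path_rounds N p = map (path_round N p) [0..<length p]"

lemma path_rounds_snoc: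
  "path_rounds N (p @ [e]) = path_rounds N p @ [path_round N (p @ [e]) (length p)]"
  unfolding path_rounds_def path_round_def by (simp add: nth_append)

lemma num_mistakes_path_rounds: "num_mistakes (path_rounds N p) = length p"
  by (simp add: num_mistakes_def path_rounds_def path_round_def)

lemma allowed_pairs_path_rounds:
  assumes "shattered Phi V H P N d" and "p \<in> P"
  shows "allowed_pairs H (path_rounds N p) = H \<union> path_examples N p"
proof -
  let ?ex = "\<lambda>i. (the (n_x (N (take i p))), the (n_y (N (take (Suc i) p))))"
  have "{(r_ex r, r_label r) | r. r \<in> set (path_rounds N p)} =
      (\<lambda>r. (r_ex r, r_label r)) ` set (path_rounds N p)"
    by blast
  also have "\<dots> = ?ex ` {..<length p}"
    by (simp add: path_rounds_def path_round_def r_label_def image_image atLeast0LessThan)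
  also have "\<dots> = path_examples N p"
    using shattered_path_labelled[OF assms] unfolding path_examples_def by force
  finally show ?thesis unfolding allowed_pairs_def by simp
qed

lemma path_rounds_consistent:
  assumes sh: "shattered Phi V H P N d" and "p \<in> P" and T: "path_consistent N p T"
  shows "\<forall>r\<in>set (path_rounds N p). round_consistent T r"
proof -
  have dt: "dff_tree Phi P N" using sh by (rule shattered_dff_tree)
  have "round_consistent T (path_round N p i)" if i: "i < length p" for i
  proof -
    obtain x y where x: "n_x (N (take i p)) = Some x" and y: "n_y (N (take (Suc i) p)) = Some y"
      using shattered_path_labelled[OF sh \<open>p \<in> P\<close> i] by blast
    obtain xh yh where e: "p ! i = (xh, yh)" by force
    have take_Suc: "take (Suc i) p = take i p @ [(xh, yh)]"
      using i e by (simp add: take_Suc_conv_app_nth)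
    have edge: "take i p @ [(xh, yh)] \<in> P"
      using dff_tree_take[OF dt \<open>p \<in> P\<close>, of "Suc i"] take_Suc by simp
    have y_T: "y = fst T x" and phi_T: "y \<noteq> yh \<Longrightarrow> snd T x xh = n_phi (N (take (Suc i) p))"
      using T i x y e unfolding path_consistent_def by auto
    have "y \<noteq> yh" using shattered_mistake[OF sh edge] y take_Suc by simp
    moreover obtain \<phi> where "n_phi (N (take (Suc i) p)) = Some \<phi>"
      using dff_tree_mistake_feature[OF dt edge] y take_Suc \<open>y \<noteq> yh\<close> by auto
    ultimately show ?thesis
      using x y e y_T phi_T by (simp add: round_consistent_def path_round_def)
  qed
  then show ?thesis unfolding path_rounds_def by auto
qed

lemma is_run_snoc:
  "is_run A (rs @ [r]) \<longleftrightarrow> is_run A rs \<and> A rs (r_ex r) = (r_expl r, r_pred r)"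
  unfolding is_run_def by (auto simp: All_less_Suc nth_append)

lemma adversary_run:
  assumes A: "dff_alg H A" and sh: "shattered Phi V H P N d" and "i \<le> d"
  shows "\<exists>p\<in>P. length p = i \<and> is_run A (path_rounds N p)"
  using \<open>i \<le> d\<close>
proof (induction i)
  case 0
  have "[] \<in> P" using shattered_dff_tree[OF sh] by (simp add: dff_tree_def)
  then show ?case by (auto simp: is_run_def path_rounds_def)
next
  case (Suc i)
  then obtain p where p: "p \<in> P" "length p = i" and run: "is_run A (path_rounds N p)" by auto
  have "\<not> is_leaf P p" using shattered_length[OF sh p(1)] p(2) Suc.prems by simp
  then obtain x where x: "n_x (N p) = Some x"
    using dff_tree_inner_example[OF shattered_dff_tree[OF sh] p(1)] by blast
  obtain xh yh where answer: "A (path_rounds N p) x = (xh, yh)" by force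
  have "(xh, yh) \<in> allowed_pairs H (path_rounds N p)"
    using A run answer unfolding dff_alg_def by metis
  then have "p @ [(xh, yh)] \<in> P"
    using allowed_pairs_path_rounds[OF sh p(1)] shattered_children[OF sh p(1) \<open>\<not> is_leaf P p\<close>]
    by auto
  moreover have "is_run A (path_rounds N (p @ [(xh, yh)]))"
    using run answer x by (simp add: path_rounds_snoc is_run_snoc path_round_def)
  ultimately show ?case using p(2) by force
qed

lemma DFFdim_le_mistake_bound:
  assumes "dff_alg H A"
  shows "DFFdim Phi TT H \<le> mistake_bound A TT H"
  unfolding DFFdim_def
proof (rule SUP_least)
  fix d
  assume "d \<in> {d. \<exists>P N. shattered Phi TT H P N d}"
  then obtain P N where sh: "shattered Phi TT H P N d" by blast
  then obtain p where p: "p \<in> P" "length p = d" and run: "is_run A (path_rounds N p)"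
    using adversary_run[OF assms] by blast
  then have "is_leaf P p" using shattered_length[OF sh] by blast
  then obtain T where "T \<in> teachers_H TT H" "path_consistent N p T"
    using shattered_leaf_teacher[OF sh] by blast
  then have "\<exists>T\<in>teachers_H TT H. \<forall>r\<in>set (path_rounds N p). round_consistent T r"
    using path_rounds_consistent[OF sh p(1)] by blast
  then have "enat (num_mistakes (path_rounds N p)) \<le> mistake_bound A TT H"
    unfolding mistake_bound_def using run by (auto intro!: SUP_upper)
  then show "enat d \<le> mistake_bound A TT H" using p(2) by (simp add: num_mistakes_path_rounds)
qed

section \<open>Grafting shattered trees\<close>

definition same_feedback ::
  "('x, 'y) teacher set \<Rightarrow> 'x \<Rightarrow> 'x \<Rightarrow> ('x, 'y) teacher \<Rightarrow> ('x, 'y) teacher set" where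
  "same_feedback V x xh T = {T' \<in> V. fst T' x = fst T x \<and> snd T' x xh = snd T x xh}"

definition graft_paths ::
  "('x \<times> 'y) set \<Rightarrow> ('x \<times> 'y \<Rightarrow> ('x \<times> 'y) list set) \<Rightarrow> ('x \<times> 'y) list set" where
  "graft_paths E Pf = insert [] {e # q | e q. e \<in> E \<and> q \<in> Pf e}"

text \<open>The root of the subtree \<open>Nf e\<close> becomes the child along the edge \<open>e\<close>: it keeps its
  example but carries the feedback of the teacher \<open>Tf e\<close> on \<open>x\<close> with explanation \<open>fst e\<close>.\<close>
definition graft_nodes ::
  "'x \<Rightarrow> ('x \<times> 'y \<Rightarrow> ('x, 'y) teacher) \<Rightarrow> ('x \<times> 'y \<Rightarrow> ('x \<times> 'y) list \<Rightarrow> ('x, 'y) node) \<Rightarrow>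
   ('x \<times> 'y) list \<Rightarrow> ('x, 'y) node" where
  "graft_nodes x Tf Nf p =
     (case p of
        [] \<Rightarrow> (None, None, Some x)
      | e # q \<Rightarrow> if q = [] then (Some (fst (Tf e) x), snd (Tf e) x (fst e), n_x (Nf e [])) else Nf e q)"

lemma graft_paths_simps [simp]:
  "[] \<in> graft_paths E Pf"
  "e # q \<in> graft_paths E Pf \<longleftrightarrow> e \<in> E \<and> q \<in> Pf e"
  unfolding graft_paths_def by blast+

lemma graft_nodes_simps [simp]:
  "graft_nodes x Tf Nf [] = (None, None, Some x)"
  "graft_nodes x Tf Nf [e] = (Some (fst (Tf e) x), snd (Tf e) x (fst e), n_x (Nf e []))"
  "q \<noteq> [] \<Longrightarrow> graft_nodes x Tf Nf (e # q) = Nf e q"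
  "n_x (graft_nodes x Tf Nf (e # q)) = n_x (Nf e q)"
  by (simp_all add: graft_nodes_def)

lemma is_leaf_graft_Cons [simp]:
  "is_leaf (graft_paths E Pf) (e # q) \<longleftrightarrow> e \<in> E \<and> is_leaf (Pf e) q"
  by (auto simp: is_leaf_def)

lemma graft_root_not_leaf: "e \<in> E \<Longrightarrow> [] \<in> Pf e \<Longrightarrow> \<not> is_leaf (graft_paths E Pf) []"
  unfolding is_leaf_def by (metis append_Nil graft_paths_simps(2))

lemma path_examples_graft:
  "path_examples (graft_nodes x Tf Nf) (e # q) = insert (x, fst (Tf e) x) (path_examples (Nf e) q)"
proof -
  have "take (Suc i) q \<noteq> []" if "i < length q" for i using that by auto
  then have "path_examples (\<lambda>q. graft_nodes x Tf Nf (e # q)) q = path_examples (Nf e) q"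
    by (intro path_examples_cong) simp_all
  then show ?thesis by (simp add: path_examples_Cons)
qed

lemma path_consistent_graft:
  "path_consistent (graft_nodes x Tf Nf) (e # q) T \<longleftrightarrow>
     fst T x = fst (Tf e) x \<and> (fst T x \<noteq> snd e \<longrightarrow> snd T x (fst e) = snd (Tf e) x (fst e)) \<and>
     path_consistent (Nf e) q T"
proof -
  have "take (Suc i) q \<noteq> []" if "i < length q" for i using that by auto
  then have "path_consistent (\<lambda>q. graft_nodes x Tf Nf (e # q)) q T \<longleftrightarrow> path_consistent (Nf e) q T"
    by (intro path_consistent_cong) simp_all
  then show ?thesis by (auto simp: path_consistent_Cons)
qed

lemma dff_tree_graft:
  assumes "E \<noteq> {}" and dt: "\<And>e. e \<in> E \<Longrightarrow> dff_tree Phi (Pf e) (Nf e)"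
    and feature: "\<And>e. e \<in> E \<Longrightarrow> snd (Tf e) x (fst e) \<in> Some ` Phi"
  shows "dff_tree Phi (graft_paths E Pf) (graft_nodes x Tf Nf)"
  unfolding dff_tree_def
proof (intro conjI ballI allI impI)
  show "p \<in> graft_paths E Pf" if "p @ [e] \<in> graft_paths E Pf" for p e
    using that dff_tree_prefix_closed[OF dt] by (cases p) auto
  show "set_option (n_phi (graft_nodes x Tf Nf p)) \<subseteq> Phi" if "p \<in> graft_paths E Pf" for p
  proof (cases p)
    case (Cons e q)
    then have "e \<in> E" "q \<in> Pf e" using that by auto
    show ?thesis
    proof (cases "q = []")
      case True
      then show ?thesis using feature[OF \<open>e \<in> E\<close>] Cons by auto
    next
      case False
      then show ?thesis using dt[OF \<open>e \<in> E\<close>] \<open>q \<in> Pf e\<close> Cons unfolding dff_tree_def by simp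
    qed
  qed simp
  show "n_x (graft_nodes x Tf Nf p) = None \<longleftrightarrow> is_leaf (graft_paths E Pf) p"
    if "p \<in> graft_paths E Pf" for p
  proof (cases p)
    case Nil
    obtain e where "e \<in> E" using \<open>E \<noteq> {}\<close> by blast
    then show ?thesis using Nil graft_root_not_leaf[OF \<open>e \<in> E\<close>, of Pf] dt[OF \<open>e \<in> E\<close>]
      by (simp add: dff_tree_def)
  next
    case (Cons e q)
    then have "e \<in> E" "q \<in> Pf e" using that by auto
    then show ?thesis using dt[OF \<open>e \<in> E\<close>] Cons unfolding dff_tree_def by simp
  qed
  show "n_phi (graft_nodes x Tf Nf (p @ [(xh, yh)])) \<noteq> None"
    if "p @ [(xh, yh)] \<in> graft_paths E Pf" and "n_y (graft_nodes x Tf Nf (p @ [(xh, yh)])) \<noteq> Some yh"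
    for p xh yh
  proof (cases p)
    case Nil
    then have "(xh, yh) \<in> E" using that by simp
    then show ?thesis using feature Nil by force
  next
    case (Cons e q)
    then have "e \<in> E" "q @ [(xh, yh)] \<in> Pf e" using that by auto
    then show ?thesis using dt[OF \<open>e \<in> E\<close>] that Cons unfolding dff_tree_def by simp
  qed
qed simp_all

lemma teacher_feature:
  assumes "teacher_class Phi V" and "T \<in> teachers_H V H" and "e \<in> H" and "fst T x \<noteq> snd e"
  shows "snd T x (fst e) \<in> Some ` Phi"
proof -
  have "is_teacher Phi T" and "fst T (fst e) = snd e"
    using assms by (auto simp: teacher_class_def teachers_H_def consistent_hist_def)
  then obtain \<phi> where "\<phi> \<in> Phi" "snd T x (fst e) = Some \<phi>"
    using assms(4) unfolding is_teacher_def by metis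
  then show ?thesis by blast
qed

lemma shattered_graft:
  assumes tc: "teacher_class Phi V" and "H \<noteq> {}"
    and sub: "\<And>e. e \<in> H \<Longrightarrow> Tf e \<in> teachers_H V H \<and> fst (Tf e) x \<noteq> snd e \<and>
      shattered Phi (same_feedback V x (fst e) (Tf e)) (insert (x, fst (Tf e) x) H) (Pf e) (Nf e) k"
  shows "shattered Phi V H (graft_paths H Pf) (graft_nodes x Tf Nf) (Suc k)"
    (is "shattered _ _ _ ?P ?N _")
proof -
  have sh: "shattered Phi (same_feedback V x (fst e) (Tf e)) (insert (x, fst (Tf e) x) H) (Pf e) (Nf e) k"
    and mistake: "fst (Tf e) x \<noteq> snd e" if "e \<in> H" for e
    using sub[OF that] by blast+
  have root_inner: "\<not> is_leaf ?P []"
  proof -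
    obtain e where "e \<in> H" using \<open>H \<noteq> {}\<close> by blast
    then show ?thesis using graft_root_not_leaf[OF \<open>e \<in> H\<close>, of Pf] shattered_dff_tree[OF sh[OF \<open>e \<in> H\<close>]]
      by (simp add: dff_tree_def)
  qed
  have "snd (Tf e) x (fst e) \<in> Some ` Phi" if "e \<in> H" for e
    using teacher_feature[OF tc _ that] sub[OF that] by blast
  then have "dff_tree Phi ?P ?N"
    using \<open>H \<noteq> {}\<close> shattered_dff_tree[OF sh] by (intro dff_tree_graft) blast+
  moreover have "n_y (?N (p @ [(xh, yh)])) \<noteq> Some yh" if "p @ [(xh, yh)] \<in> ?P" for p xh yh
    using that mistake shattered_mistake[OF sh] by (cases p) auto
  moreover have "{e. p @ [e] \<in> ?P} = H \<union> path_examples ?N p" if "p \<in> ?P" "\<not> is_leaf ?P p" for p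
  proof (cases p)
    case Nil
    then show ?thesis using shattered_dff_tree[OF sh] by (auto simp: dff_tree_def path_examples_def)
  next
    case (Cons e q)
    with that have "e \<in> H" "q \<in> Pf e" "\<not> is_leaf (Pf e) q" by auto
    then have "{e'. q @ [e'] \<in> Pf e} = insert (x, fst (Tf e) x) H \<union> path_examples (Nf e) q"
      using shattered_children[OF sh] by blast
    then show ?thesis using Cons \<open>e \<in> H\<close> by (auto simp: path_examples_graft)
  qed
  moreover have "\<exists>T\<in>teachers_H V H. path_consistent ?N p T" if "is_leaf ?P p" for p
  proof (cases p)
    case Nil
    with that root_inner show ?thesis by simp
  next
    case (Cons e q)
    with that have "e \<in> H" "is_leaf (Pf e) q" by auto
    then obtain T where "T \<in> teachers_H (same_feedback V x (fst e) (Tf e)) (insert (x, fst (Tf e) x) H)"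
      and "path_consistent (Nf e) q T"
      using shattered_leaf_teacher[OF sh] by blast
    then have "T \<in> teachers_H V H \<and> path_consistent ?N p T"
      using Cons by (auto simp: path_consistent_graft teachers_H_def same_feedback_def consistent_hist_def)
    then show ?thesis by blast
  qed
  moreover have "length p \<le> Suc k \<and> (is_leaf ?P p \<longleftrightarrow> length p = Suc k)" if "p \<in> ?P" for p
  proof (cases p)
    case Nil
    with root_inner show ?thesis by simp
  next
    case (Cons e q)
    with that have "e \<in> H" "q \<in> Pf e" by auto
    with Cons show ?thesis using shattered_length[OF sh] by auto
  qed
  ultimately show ?thesis unfolding shattered_def by blast
qed

section \<open>The standard optimal algorithm\<close>

definition dim_reducing ::
  "('x \<Rightarrow> bool) set \<Rightarrow> ('x, 'y) teacher set \<Rightarrow> ('x \<times> 'y) set \<Rightarrow> 'x \<Rightarrow> 'x \<times> 'y \<Rightarrow> bool" where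
  "dim_reducing Phi V H x e \<longleftrightarrow>
     (\<forall>T\<in>V. fst T x \<noteq> snd e \<longrightarrow>
        DFFdim Phi (same_feedback V x (fst e) T) (insert (x, fst T x) H) < DFFdim Phi V H)"

lemma dim_reducing_exists:
  assumes tc: "teacher_class Phi V" and "H \<noteq> {}" and cons: "\<forall>T\<in>V. consistent_hist H T"
    and dim: "DFFdim Phi V H = enat k"
  shows "\<exists>e\<in>H. dim_reducing Phi V H x e"
proof (rule ccontr)
  assume none: "\<not> ?thesis"
  have "\<exists>T P N. T \<in> teachers_H V H \<and> fst T x \<noteq> snd e \<and>
      shattered Phi (same_feedback V x (fst e) T) (insert (x, fst T x) H) P N k" if "e \<in> H" for e
  proof -
    obtain T where T: "T \<in> V" "fst T x \<noteq> snd e"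
      and "enat k \<le> DFFdim Phi (same_feedback V x (fst e) T) (insert (x, fst T x) H)"
      using none \<open>e \<in> H\<close> dim unfolding dim_reducing_def by auto
    moreover have "T \<in> teachers_H (same_feedback V x (fst e) T) (insert (x, fst T x) H)"
      using T(1) cons by (auto simp: teachers_H_def same_feedback_def consistent_hist_def)
    ultimately obtain P N where
      "shattered Phi (same_feedback V x (fst e) T) (insert (x, fst T x) H) P N k"
      using shattered_iff_le_DFFdim by blast
    moreover have "T \<in> teachers_H V H" using T(1) cons by (simp add: teachers_H_def)
    ultimately show ?thesis using T(2) by blast
  qed
  then obtain Tf Pf Nf where "\<And>e. e \<in> H \<Longrightarrow> Tf e \<in> teachers_H V H \<and> fst (Tf e) x \<noteq> snd e \<and>
      shattered Phi (same_feedback V x (fst e) (Tf e)) (insert (x, fst (Tf e) x) H) (Pf e) (Nf e) k"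
    by metis
  then have "shattered Phi V H (graft_paths H Pf) (graft_nodes x Tf Nf) (Suc k)"
    by (rule shattered_graft[OF tc \<open>H \<noteq> {}\<close>])
  then show False using shattered_le_DFFdim dim by fastforce
qed

definition version_space ::
  "('x, 'y) teacher set \<Rightarrow> ('x \<times> 'y) set \<Rightarrow> ('x, 'y) round list \<Rightarrow> ('x, 'y) teacher set" where
  "version_space TT H rs = {T \<in> teachers_H TT H. \<forall>r\<in>set rs. round_consistent T r}"

definition mistake_rounds :: "('x, 'y) round list \<Rightarrow> ('x, 'y) round list" where
  "mistake_rounds rs = filter (\<lambda>r. r_fb r \<noteq> None) rs"

text \<open>A variant of Littlestone's Standard Optimal Algorithm. It remembers only the mistake
  rounds, since a correct round need not lower the dimension.\<close>
definition soa ::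
  "('x \<Rightarrow> bool) set \<Rightarrow> ('x, 'y) teacher set \<Rightarrow> ('x \<times> 'y) set \<Rightarrow> ('x, 'y) dff_algorithm" where
  "soa Phi TT H rs x =
     (let ms = mistake_rounds rs; V = version_space TT H ms; E = allowed_pairs H ms
      in SOME e. e \<in> E \<and> ((\<exists>e'\<in>E. dim_reducing Phi V E x e') \<longrightarrow> dim_reducing Phi V E x e))"

lemma soa_allowed_reducing:
  fixes rs :: "('x, 'y) round list"
  assumes "H \<noteq> {}"
  defines "ms \<equiv> mistake_rounds rs"
  shows "soa Phi TT H rs x \<in> allowed_pairs H ms"
    and "\<exists>e\<in>allowed_pairs H ms. dim_reducing Phi (version_space TT H ms) (allowed_pairs H ms) x e \<Longrightarrow>
      dim_reducing Phi (version_space TT H ms) (allowed_pairs H ms) x (soa Phi TT H rs x)"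
proof -
  let ?V = "version_space TT H ms" and ?E = "allowed_pairs H ms"
  obtain e0 where "e0 \<in> ?E" using assms(1) by (auto simp: allowed_pairs_def)
  then have "\<exists>e. e \<in> ?E \<and> ((\<exists>e'\<in>?E. dim_reducing Phi ?V ?E x e') \<longrightarrow> dim_reducing Phi ?V ?E x e)"
    by blast
  from someI_ex[OF this]
  show "soa Phi TT H rs x \<in> ?E"
    and "\<exists>e\<in>?E. dim_reducing Phi ?V ?E x e \<Longrightarrow> dim_reducing Phi ?V ?E x (soa Phi TT H rs x)"
    unfolding soa_def ms_def Let_def by blast+
qed

lemma soa_dff_alg: "H \<noteq> {} \<Longrightarrow> dff_alg H (soa Phi TT H)"
  unfolding dff_alg_def
proof (intro allI impI)
  fix rs x
  assume "H \<noteq> {}"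
  have "allowed_pairs H (mistake_rounds rs) \<subseteq> allowed_pairs H rs"
    by (auto simp: allowed_pairs_def mistake_rounds_def)
  then show "soa Phi TT H rs x \<in> allowed_pairs H rs" using soa_allowed_reducing(1)[OF \<open>H \<noteq> {}\<close>] by blast
qed

lemma round_consistent_label: "round_consistent T r \<Longrightarrow> r_label r = fst T (r_ex r)"
  by (auto simp: round_consistent_def r_label_def split: option.splits)

lemma version_space_consistent_hist:
  "T \<in> version_space TT H rs \<Longrightarrow> consistent_hist (allowed_pairs H rs) T"
  by (auto simp: version_space_def teachers_H_def consistent_hist_def allowed_pairs_def
      round_consistent_label)

lemma version_space_snoc_mistake:
  assumes "round_consistent T0 r" and "r_fb r \<noteq> None"
  shows "version_space TT H (rs @ [r]) = same_feedback (version_space TT H rs) (r_ex r) (r_expl r) T0"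
  using assms by (auto simp: version_space_def same_feedback_def round_consistent_def)

lemma allowed_pairs_snoc:
  "round_consistent T0 r \<Longrightarrow> allowed_pairs H (rs @ [r]) = insert (r_ex r, fst T0 (r_ex r)) (allowed_pairs H rs)"
  by (auto simp: allowed_pairs_def round_consistent_label)

lemma soa_mistake_lowers_DFFdim:
  fixes rs :: "('x, 'y) round list"
  assumes tc: "teacher_class Phi TT" and "H \<noteq> {}"
    and answer: "soa Phi TT H rs (r_ex r) = (r_expl r, r_pred r)"
    and T0: "T0 \<in> version_space TT H (mistake_rounds rs)" "round_consistent T0 r"
    and "r_fb r \<noteq> None"
    and dim: "DFFdim Phi (version_space TT H (mistake_rounds rs)) (allowed_pairs H (mistake_rounds rs)) = enat k"
  shows "DFFdim Phi (version_space TT H (mistake_rounds rs @ [r])) (allowed_pairs H (mistake_rounds rs @ [r]))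
      < enat k"
proof -
  let ?V = "version_space TT H (mistake_rounds rs)" and ?E = "allowed_pairs H (mistake_rounds rs)"
  have "teacher_class Phi ?V" using tc by (auto simp: teacher_class_def version_space_def teachers_H_def)
  moreover have "?E \<noteq> {}" using \<open>H \<noteq> {}\<close> by (simp add: allowed_pairs_def)
  ultimately have "\<exists>e\<in>?E. dim_reducing Phi ?V ?E (r_ex r) e"
    by (rule dim_reducing_exists[OF _ _ _ dim]) (use version_space_consistent_hist in blast)
  then have "dim_reducing Phi ?V ?E (r_ex r) (r_expl r, r_pred r)"
    using soa_allowed_reducing(2)[OF \<open>H \<noteq> {}\<close>] answer by metis
  moreover have "fst T0 (r_ex r) \<noteq> r_pred r"
    using T0(2) \<open>r_fb r \<noteq> None\<close> by (auto simp: round_consistent_def)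
  ultimately have "DFFdim Phi (same_feedback ?V (r_ex r) (r_expl r) T0) (insert (r_ex r, fst T0 (r_ex r)) ?E)
      < enat k"
    using T0(1) dim unfolding dim_reducing_def by auto
  then show ?thesis
    using T0(2) \<open>r_fb r \<noteq> None\<close> by (simp add: version_space_snoc_mistake allowed_pairs_snoc)
qed

lemma soa_run_bound:
  assumes tc: "teacher_class Phi TT" and "H \<noteq> {}" and T0: "T0 \<in> teachers_H TT H"
    and "is_run (soa Phi TT H) rs" and "\<forall>r\<in>set rs. round_consistent T0 r"
  shows "enat (num_mistakes rs) +
      DFFdim Phi (version_space TT H (mistake_rounds rs)) (allowed_pairs H (mistake_rounds rs))
    \<le> DFFdim Phi TT H"
  using assms(4,5)
proof (induction rs rule: rev_induct)
  case Nil
  have "version_space TT H [] = teachers_H TT H" "allowed_pairs H [] = H"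
    by (simp_all add: version_space_def allowed_pairs_def)
  then show ?case by (simp add: num_mistakes_def mistake_rounds_def DFFdim_teachers_H zero_enat_def)
next
  case (snoc r rs)
  let ?ms = "mistake_rounds rs"
  let ?dim = "\<lambda>ms. DFFdim Phi (version_space TT H ms) (allowed_pairs H ms)"
  have run: "is_run (soa Phi TT H) rs" and answer: "soa Phi TT H rs (r_ex r) = (r_expl r, r_pred r)"
    using snoc.prems(1) by (simp_all add: is_run_snoc)
  have IH: "enat (num_mistakes rs) + ?dim ?ms \<le> DFFdim Phi TT H"
    using snoc.IH run snoc.prems(2) by simp
  show ?case
  proof (cases "r_fb r = None")
    case True
    then show ?thesis using IH by (simp add: num_mistakes_def mistake_rounds_def)
  next
    case False
    then have ms: "mistake_rounds (rs @ [r]) = ?ms @ [r]" "num_mistakes (rs @ [r]) = Suc (num_mistakes rs)"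
      by (simp_all add: mistake_rounds_def num_mistakes_def)
    show ?thesis
    proof (cases "?dim ?ms")
      case (enat k)
      have "T0 \<in> version_space TT H ?ms"
        using T0 snoc.prems(2) by (auto simp: version_space_def mistake_rounds_def)
      then have "?dim (?ms @ [r]) < enat k"
        using soa_mistake_lowers_DFFdim[OF tc \<open>H \<noteq> {}\<close> answer] snoc.prems(2) False enat by simp
      then obtain j where "?dim (?ms @ [r]) = enat j" "j < k" by (cases "?dim (?ms @ [r])") auto
      then have "enat (num_mistakes (rs @ [r])) + ?dim (mistake_rounds (rs @ [r]))
          \<le> enat (num_mistakes rs) + ?dim ?ms"
        using enat ms by simp
      then show ?thesis using IH by (rule order_trans)
    next
      case infinity
      then show ?thesis using IH by simp
    qed
  qed
qed

lemma mistake_bound_soa_le: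
  assumes "teacher_class Phi TT" and "H \<noteq> {}"
  shows "mistake_bound (soa Phi TT H) TT H \<le> DFFdim Phi TT H"
  unfolding mistake_bound_def
proof (rule SUP_least)
  fix rs
  assume "rs \<in> {rs. is_run (soa Phi TT H) rs \<and> (\<exists>T\<in>teachers_H TT H. \<forall>r\<in>set rs. round_consistent T r)}"
  then have "enat (num_mistakes rs) +
      DFFdim Phi (version_space TT H (mistake_rounds rs)) (allowed_pairs H (mistake_rounds rs))
    \<le> DFFdim Phi TT H"
    using soa_run_bound[OF assms] by blast
  then show "enat (num_mistakes rs) \<le> DFFdim Phi TT H" by (rule order_trans[rotated]) simp
qed

theorem theorem1:
  fixes Phi :: "('x \<Rightarrow> bool) set"
    and TT :: "('x, 'y::finite) teacher set"
    and H :: "('x \<times> 'y) set"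
  assumes "teacher_class Phi TT"
    and "H \<noteq> {}"
    and "teachers_H TT H \<noteq> {}"
  shows "(\<exists>A. dff_alg H A \<and> mistake_bound A TT H = DFFdim Phi TT H) \<and>
         (\<forall>A. dff_alg H A \<longrightarrow> DFFdim Phi TT H \<le> mistake_bound A TT H)"
proof -
  have lower: "\<forall>A. dff_alg H A \<longrightarrow> DFFdim Phi TT H \<le> mistake_bound A TT H"
    using DFFdim_le_mistake_bound by blast
  have "dff_alg H (soa Phi TT H)" using soa_dff_alg[OF assms(2)] .
  moreover have "mistake_bound (soa Phi TT H) TT H = DFFdim Phi TT H"
    using mistake_bound_soa_le[OF assms(1,2)] lower calculation by (simp add: order_antisym)
  ultimately show ?thesis using lower by blast
qed

end
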